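(* Let $\mathcal{S}_1,\mathcal{S}_2\in\mathfrak{P}(X)$ with $\mathcal{S}_1\prec\mathcal{S}_2$. Then $$1\le|\mathcal{P}(\mathcal{S}_2)|-|\mathcal{H}(\mathcal{S}_2)|<|\mathcal{P}(\mathcal{S}_1)|-|\mathcal{H}(\mathcal{S}_1)|\le|X|.$$ Moreover, if $(|\mathcal{P}(\mathcal{S}_1)|-|\mathcal{H}(\mathcal{S}_1)|)-(|\mathcal{P}(\mathcal{S}_2)|-|\mathcal{H}(\mathcal{S}_2)|)\ge 2$, then there exists $\mathcal{S}_3\in\mathfrak{P}(X)$ with $\mathcal{S}_1\prec\mathcal{S}_3\prec\mathcal{S}_2$.
   Context: Let $X$ be a finite non-empty set. A set pair system on $X$ is a set of ordered pairs $(S,H)$ of subsets of $X$ with $S\ne\emptyset$ and $S\cap H=\emptyset$. On set pairs, $(S_1,H_1)\le(S_2,H_2)$ iff they are equal or one of: $S_1\cup H_1\subseteq S_2$; $S_1\cup H_1\subseteq H_2$; $S_1\subsetneq S_2$ and $H_1=H_2\ne\emptyset$. For set pair systems, $\mathcal{S}_1\preceq\mathcal{S}_2$ iff (SP1) for every $(S_1,H_1)\in\mathcal{S}_1$ there is $(S_2,H_2)\in\mathcal{S}_2$ with $(S_1,H_1)\le(S_2,H_2)$, and (SP2) for every $(S_2,H_2)\in\mathcal{S}_2$ with $H_2\ne\emptyset$, if some $(S_1,H_1)\in\mathcal{S}_1$ has $H_1=H_2$ then some such $(S_1,H_1)$ satisfies $(S_1,H_1)\le(S_2,H_2)$; $\mathcal{S}_1\prec\mathcal{S}_2$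 means $\mathcal{S}_1\preceq\mathcal{S}_2$ and $\mathcal{S}_1\ne\mathcal{S}_2$. A polestar system is a set pair system $\mathcal{S}$ with (PL1) $\mathcal{P}(\mathcal{S})=\{S:(S,H)\in\mathcal{S}\}$ is a partition of $X$; (PL2) distinct $(S,H),(S',H')\in\mathcal{S}$ have $S\ne S'$; (PL3) for each $(S,H)\in\mathcal{S}$ with $H\ne\emptyset$, $(H,\emptyset)\in\mathcal{S}$ and there is exactly one $(S',H')\in\mathcal{S}$ with $(S',H')\ne(S,H)$ and $H'=H$. Also $\mathcal{H}(\mathcal{S})=\{H:(S,H)\in\mathcal{S},H\ne\emptyset\}$, and $\mathfrak{P}(X)$ is the set of polestar systems on $X$. *)

theory Defs
  imports Main
begin

type_synonym 'a set_pair = "'a set \<times> 'a set"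

definition set_pair_system :: "'a set \<Rightarrow> 'a set_pair set \<Rightarrow> bool" where
  "set_pair_system X \<S> \<longleftrightarrow>
     (\<forall>(S, H) \<in> \<S>. S \<subseteq> X \<and> H \<subseteq> X \<and> S \<noteq> {} \<and> S \<inter> H = {})"

definition sp_le :: "'a set_pair \<Rightarrow> 'a set_pair \<Rightarrow> bool" where
  "sp_le p q \<longleftrightarrow> (case p of (S1, H1) \<Rightarrow> case q of (S2, H2) \<Rightarrow>
      p = q \<or> S1 \<union> H1 \<subseteq> S2 \<or> S1 \<union> H1 \<subseteq> H2 \<or> (S1 \<subset> S2 \<and> H1 = H2 \<and> H2 \<noteq> {}))"

definition sps_le :: "'a set_pair set \<Rightarrow> 'a set_pair set \<Rightarrow> bool" where
  "sps_le \<S>1 \<S>2 \<longleftrightarrow>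
     (\<forall>p1 \<in> \<S>1. \<exists>p2 \<in> \<S>2. sp_le p1 p2) \<and>
     (\<forall>(S2, H2) \<in> \<S>2. H2 \<noteq> {} \<longrightarrow>
        (\<exists>(S1, H1) \<in> \<S>1. H1 = H2) \<longrightarrow>
        (\<exists>(S1, H1) \<in> \<S>1. H1 = H2 \<and> sp_le (S1, H1) (S2, H2)))"

definition sps_less :: "'a set_pair set \<Rightarrow> 'a set_pair set \<Rightarrow> bool" where
  "sps_less \<S>1 \<S>2 \<longleftrightarrow> sps_le \<S>1 \<S>2 \<and> \<S>1 \<noteq> \<S>2"

definition parts :: "'a set_pair set \<Rightarrow> 'a set set" where
  "parts \<S> = {S. \<exists>H. (S, H) \<in> \<S>}"

definition hulls :: "'a set_pair set \<Rightarrow> 'a set set" where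
  "hulls \<S> = {H. \<exists>S. (S, H) \<in> \<S> \<and> H \<noteq> {}}"

definition is_partition :: "'a set \<Rightarrow> 'a set set \<Rightarrow> bool" where
  "is_partition X P \<longleftrightarrow> \<Union>P = X \<and> {} \<notin> P \<and>
     (\<forall>A \<in> P. \<forall>B \<in> P. A \<noteq> B \<longrightarrow> A \<inter> B = {})"

definition polestar_system :: "'a set \<Rightarrow> 'a set_pair set \<Rightarrow> bool" where
  "polestar_system X \<S> \<longleftrightarrow> set_pair_system X \<S> \<and>
     is_partition X (parts \<S>) \<and>
     (\<forall>(S, H) \<in> \<S>. \<forall>(S', H') \<in> \<S>. (S, H) \<noteq> (S', H') \<longrightarrow> S \<noteq> S') \<and>
     (\<forall>(S, H) \<in> \<S>. H \<noteq> {} \<longrightarrow>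
        (H, {}) \<in> \<S> \<and> (\<exists>!p \<in> \<S>. p \<noteq> (S, H) \<and> snd p = H))"

definition polestar_systems :: "'a set \<Rightarrow> 'a set_pair set set" where
  "polestar_systems X = {\<S>. polestar_system X \<S>}"

end

(*
  |P(S)| - |H(S)| is the number of non-hull parts of S.  If S1 <= S2, every non-hull part
  of S2 contains a non-hull part of S1, so this number cannot increase.  Call a part free
  if its hull is empty and it is not itself a hull.  If S1 <= S2 and S1 differs from S2,
  the way S1 sits inside S2 exhibits one of four local configurations: two free parts of
  S1 in one part of S2; two siblings of S1 together with their hull in one part of S2; a
  part of S1 with hull H and a free part of S1 in one part of S2 with hull H; or two free
  parts of S1 that in S2 have a common free part of S1 as hull.  Merging the parts
  concerned, or attaching the hull, gives a polestar system S3 with S1 <= S3 <= S2 and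
  exactly one non-hull part fewer than S1.  Hence the number drops strictly, and if it
  drops by at least two then S3 lies strictly between S1 and S2.
*)

theory Submission
  imports Defs
begin

lemma polestar_pairD:
  assumes "polestar_system X S" and "(A, H) \<in> S"
  shows "A \<subseteq> X" and "H \<subseteq> X" and "A \<noteq> {}" and "A \<inter> H = {}"
  using assms unfolding polestar_system_def set_pair_system_def by auto

lemma polestar_hull_unique:
  assumes "polestar_system X S" and "(A, H) \<in> S" and "(A, H') \<in> S"
  shows "H = H'"
proof -
  have "\<forall>(A, H) \<in> S. \<forall>(A', H') \<in> S. (A, H) \<noteq> (A', H') \<longrightarrow> A \<noteq> A'"
    using assms(1) unfolding polestar_system_def by (elim conjE)
  with assms(2,3) show ?thesis by fast
qed

lemma polestar_partition:
  assumes "polestar_system X S"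
  shows "is_partition X (parts S)"
  using assms unfolding polestar_system_def by (elim conjE)

lemma polestar_parts_eq:
  assumes "polestar_system X S" and "(A, H) \<in> S" and "(B, H') \<in> S" and "A \<inter> B \<noteq> {}"
  shows "A = B"
proof -
  have "A \<in> parts S" and "B \<in> parts S"
    using assms(2,3) unfolding parts_def by auto
  with polestar_partition[OF assms(1)] assms(4) show ?thesis
    unfolding is_partition_def by blast
qed

lemma polestar_covers:
  assumes "polestar_system X S" and "x \<in> X"
  obtains A H where "(A, H) \<in> S" and "x \<in> A"
proof -
  have "\<Union>(parts S) = X"
    using polestar_partition[OF assms(1)] unfolding is_partition_def by blast
  with assms(2) show thesis
    using that unfolding parts_def by blast
qed

lemma polestar_hull_axiom:
  assumes "polestar_system X S" and "(A, H) \<in> S" and "H \<noteq> {}"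
  shows "(H, {}) \<in> S \<and> (\<exists>!p \<in> S. p \<noteq> (A, H) \<and> snd p = H)"
proof -
  have "\<forall>(A, H) \<in> S. H \<noteq> {} \<longrightarrow> (H, {}) \<in> S \<and> (\<exists>!p \<in> S. p \<noteq> (A, H) \<and> snd p = H)"
    using assms(1) unfolding polestar_system_def by (elim conjE)
  from bspec[OF this assms(2)] assms(3) show ?thesis by simp
qed

lemma polestar_hull_part:
  assumes "polestar_system X S" and "(A, H) \<in> S" and "H \<noteq> {}"
  shows "(H, {}) \<in> S"
  using polestar_hull_axiom[OF assms] by (rule conjunct1)

lemma polestar_siblings:
  assumes "polestar_system X S" and "(A, H) \<in> S" and "H \<noteq> {}"
  obtains B where "B \<noteq> A" and "{C. (C, H) \<in> S} = {A, B}"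
proof -
  have "\<exists>!p. p \<in> S \<and> p \<noteq> (A, H) \<and> snd p = H"
    using polestar_hull_axiom[OF assms] by (rule conjunct2)
  then obtain p where p: "p \<in> S" "p \<noteq> (A, H)" "snd p = H"
    and uniq: "\<And>q. q \<in> S \<and> q \<noteq> (A, H) \<and> snd q = H \<Longrightarrow> q = p"
    by (elim ex1E) blast
  define B where "B = fst p"
  have p_eq: "p = (B, H)"
    using p(3) unfolding B_def by (metis prod.collapse)
  have members: "(C, H) \<in> S \<longleftrightarrow> C = A \<or> C = B" for C
  proof
    assume C: "(C, H) \<in> S"
    show "C = A \<or> C = B"
    proof (cases "C = A")
      case False
      with C have "(C, H) = p" by (intro uniq) simp
      then show ?thesis by (simp add: p_eq)
    qed simp
  next
    assume "C = A \<or> C = B"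
    then show "(C, H) \<in> S"
      using assms(2) p(1) p_eq by blast
  qed
  have "B \<noteq> A"
    using p(2) p_eq by simp
  moreover have "{C. (C, H) \<in> S} = {A, B}"
    using members by blast
  ultimately show thesis by (rule that)
qed

lemma polestar_sibling_exists:
  assumes "polestar_system X S" and "(A, H) \<in> S" and "H \<noteq> {}"
  obtains B where "(B, H) \<in> S" and "B \<noteq> A"
  by (rule polestar_siblings[OF assms]) blast

lemma polestar_sibling_cases:
  assumes "polestar_system X S" and "(A, H) \<in> S" and "(B, H) \<in> S" and "(C, H) \<in> S"
    and "H \<noteq> {}" and "A \<noteq> B"
  shows "C = A \<or> C = B"
  by (rule polestar_siblings[OF assms(1,2,5)]) (use assms(3,4,6) in blast)

lemma polestar_part_with_hull_not_hull:
  assumes "polestar_system X S" and "(A, H) \<in> S" and "H \<noteq> {}"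
  shows "A \<notin> hulls S"
proof
  assume "A \<in> hulls S"
  then obtain B where "(B, A) \<in> S" and "A \<noteq> {}"
    unfolding hulls_def by auto
  then have "(A, {}) \<in> S"
    by (rule polestar_hull_part[OF assms(1)])
  then show False
    using polestar_hull_unique[OF assms(1,2)] assms(3) by blast
qed

lemma unique_sibling:
  assumes "B \<noteq> A" and "{C. (C, H) \<in> S} = {A, B}"
  shows "\<exists>!p \<in> S. p \<noteq> (A, H) \<and> snd p = H"
proof (rule ex1I[of _ "(B, H)"])
  have members: "(C, H) \<in> S \<longleftrightarrow> C = A \<or> C = B" for C
    using assms(2) by blast
  then show "(B, H) \<in> S \<and> (B, H) \<noteq> (A, H) \<and> snd (B, H) = H"
    using assms(1) by simp
  fix p assume p: "p \<in> S \<and> p \<noteq> (A, H) \<and> snd p = H"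
  then have "(fst p, H) \<in> S" and "fst p \<noteq> A"
    by (metis prod.collapse)+
  then have "fst p = B"
    using members by blast
  with p show "p = (B, H)"
    by (metis prod.collapse)
qed

lemma polestar_systemI:
  assumes pair: "\<And>A H. (A, H) \<in> S \<Longrightarrow> A \<noteq> {} \<and> A \<inter> H = {}"
    and cover: "\<Union>(parts S) = X"
    and disjoint: "\<And>A H B H'. (A, H) \<in> S \<Longrightarrow> (B, H') \<in> S \<Longrightarrow> A \<inter> B \<noteq> {} \<Longrightarrow> A = B \<and> H = H'"
    and hull: "\<And>A H. (A, H) \<in> S \<Longrightarrow> H \<noteq> {} \<Longrightarrow>
                 (H, {}) \<in> S \<and> (\<exists>B. B \<noteq> A \<and> {C. (C, H) \<in> S} = {A, B})"
  shows "polestar_system X S"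
  unfolding polestar_system_def
proof (intro conjI)
  have part_sub: "A \<subseteq> X" if "(A, H) \<in> S" for A H
    using that cover unfolding parts_def by blast
  show "set_pair_system X S"
    unfolding set_pair_system_def
  proof clarify
    fix A H assume AH: "(A, H) \<in> S"
    have "H \<subseteq> X"
    proof (cases "H = {}")
      case False
      then show ?thesis using hull[OF AH] part_sub by blast
    qed simp
    then show "A \<subseteq> X \<and> H \<subseteq> X \<and> A \<noteq> {} \<and> A \<inter> H = {}"
      using pair[OF AH] part_sub[OF AH] by blast
  qed
  show "is_partition X (parts S)"
    unfolding is_partition_def
  proof (intro conjI ballI impI)
    show "{} \<notin> parts S"
      using pair unfolding parts_def by blast
    fix A B assume "A \<in> parts S" "B \<in> parts S" "A \<noteq> B"
    then show "A \<inter> B = {}"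
      using disjoint unfolding parts_def by blast
  qed (rule cover)
  have same_hull: "H = H'" if "(A, H) \<in> S" and "(A, H') \<in> S" for A H H'
    using disjoint[OF that] pair[OF that(1)] by blast
  show "\<forall>(A, H)\<in>S. \<forall>(A', H')\<in>S. (A, H) \<noteq> (A', H') \<longrightarrow> A \<noteq> A'"
  proof clarsimp
    fix A H H' assume "(A, H) \<in> S" "(A, H') \<in> S" "H \<noteq> H'"
    with same_hull show False by blast
  qed
  show "\<forall>(A, H)\<in>S. H \<noteq> {} \<longrightarrow> (H, {}) \<in> S \<and> (\<exists>!p \<in> S. p \<noteq> (A, H) \<and> snd p = H)"
  proof clarify
    fix A H assume AH: "(A, H) \<in> S" "H \<noteq> {}"
    from hull[OF AH] obtain B where "(H, {}) \<in> S" and "B \<noteq> A" and "{C. (C, H) \<in> S} = {A, B}"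
      by blast
    then show "(H, {}) \<in> S \<and> (\<exists>!p \<in> S. p \<noteq> (A, H) \<and> snd p = H)"
      using unique_sibling by (intro conjI)
  qed
qed

lemma sp_le_iff:
  "sp_le (A, H) (B, K) \<longleftrightarrow>
     (A, H) = (B, K) \<or> A \<union> H \<subseteq> B \<or> A \<union> H \<subseteq> K \<or> (A \<subset> B \<and> H = K \<and> K \<noteq> {})"
  by (simp add: sp_le_def)

lemma sp_le_refl: "sp_le p p"
  by (cases p) (simp add: sp_le_def)

lemma sp_le_same_hull_subset:
  assumes "sp_le (A, K) (B, K)" and "K \<noteq> {}" and "A \<noteq> {}" and "A \<inter> K = {}" and "B \<inter> K = {}"
  shows "A \<subseteq> B"
  using assms unfolding sp_le_iff by blast

lemma sps_leI:
  assumes pairs: "\<And>A H. (A, H) \<in> S \<Longrightarrow> \<exists>B K. (B, K) \<in> T \<and> sp_le (A, H) (B, K)"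
    and hulls: "\<And>B K A. (B, K) \<in> T \<Longrightarrow> K \<noteq> {} \<Longrightarrow> (A, K) \<in> S \<Longrightarrow>
                  \<exists>A'. (A', K) \<in> S \<and> sp_le (A', K) (B, K)"
  shows "sps_le S T"
  unfolding sps_le_def
proof (rule conjI)
  show "\<forall>p \<in> S. \<exists>q \<in> T. sp_le p q"
  proof
    fix p assume "p \<in> S"
    then show "\<exists>q \<in> T. sp_le p q"
      using pairs[of "fst p" "snd p"] by auto
  qed
  show "\<forall>(B, K) \<in> T. K \<noteq> {} \<longrightarrow> (\<exists>(A, H) \<in> S. H = K) \<longrightarrow>
          (\<exists>(A, H) \<in> S. H = K \<and> sp_le (A, H) (B, K))"
  proof clarify
    fix B K A assume "(B, K) \<in> T" "K \<noteq> {}" "(A, K) \<in> S"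
    then obtain A' where "(A', K) \<in> S" and "sp_le (A', K) (B, K)"
      using hulls by blast
    then show "\<exists>(A, H) \<in> S. H = K \<and> sp_le (A, H) (B, K)"
      by blast
  qed
qed

lemma sps_le_pairD:
  assumes "sps_le S T" and "(A, H) \<in> S"
  obtains B K where "(B, K) \<in> T" and "sp_le (A, H) (B, K)"
proof -
  have "\<forall>p \<in> S. \<exists>q \<in> T. sp_le p q"
    using assms(1) unfolding sps_le_def by (elim conjE)
  then obtain q where "q \<in> T" and "sp_le (A, H) q"
    using assms(2) by blast
  then show thesis
    using that by (metis prod.collapse)
qed

lemma sps_le_hullD:
  assumes "sps_le S T" and "(B, K) \<in> T" and "K \<in> hulls S"
  obtains A where "(A, K) \<in> S" and "sp_le (A, K) (B, K)"
proof -
  have "\<forall>(B, K) \<in> T. K \<noteq> {} \<longrightarrow> (\<exists>(A, H) \<in> S. H = K) \<longrightarrow>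
          (\<exists>(A, H) \<in> S. H = K \<and> sp_le (A, H) (B, K))"
    using assms(1) unfolding sps_le_def by (elim conjE)
  moreover have "K \<noteq> {}" and "\<exists>(A, H) \<in> S. H = K"
    using assms(3) unfolding hulls_def by auto
  ultimately have "\<exists>(A, H) \<in> S. H = K \<and> sp_le (A, H) (B, K)"
    using assms(2) by fast
  then show thesis
    using that by blast
qed

definition nonhull_parts :: "'a set_pair set \<Rightarrow> 'a set set" where
  "nonhull_parts S = parts S - hulls S"

lemma nonhull_parts_iff: "A \<in> nonhull_parts S \<longleftrightarrow> (\<exists>H. (A, H) \<in> S) \<and> A \<notin> hulls S"
  unfolding nonhull_parts_def parts_def by blast

lemma hulls_iff: "H \<in> hulls S \<longleftrightarrow> (\<exists>A. (A, H) \<in> S) \<and> H \<noteq> {}"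
  unfolding hulls_def by blast

lemma polestar_hulls_subset_parts:
  assumes "polestar_system X S"
  shows "hulls S \<subseteq> parts S"
  using polestar_hull_part[OF assms] unfolding hulls_def parts_def by blast

lemma polestar_finite_parts:
  assumes "polestar_system X S" and "finite X"
  shows "finite (parts S)"
proof (rule finite_subset)
  show "parts S \<subseteq> Pow X"
    using polestar_pairD(1)[OF assms(1)] unfolding parts_def by blast
qed (use assms(2) in simp)

lemma polestar_finite_nonhull_parts:
  assumes "polestar_system X S" and "finite X"
  shows "finite (nonhull_parts S)"
  using polestar_finite_parts[OF assms] unfolding nonhull_parts_def by blast

lemma polestar_rank_eq:
  assumes "polestar_system X S" and "finite X"
  shows "int (card (parts S)) - int (card (hulls S)) = int (card (nonhull_parts S))"
proof -
  have "finite (parts S)" and "hulls S \<subseteq> parts S"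
    using polestar_finite_parts[OF assms] polestar_hulls_subset_parts[OF assms(1)] .
  then show ?thesis
    unfolding nonhull_parts_def by (simp add: card_Diff_subset card_mono finite_subset of_nat_diff)
qed

lemma polestar_card_parts_le:
  assumes "polestar_system X S" and "finite X"
  shows "card (parts S) \<le> card X"
proof -
  define pick where "pick A = (SOME x. x \<in> A)" for A :: "'a set"
  have pick: "pick A \<in> A" if "A \<in> parts S" for A
  proof -
    from that obtain H where "(A, H) \<in> S"
      unfolding parts_def by blast
    then have "\<exists>x. x \<in> A"
      using polestar_pairD(3)[OF assms(1)] by blast
    then show ?thesis
      unfolding pick_def by (rule someI_ex)
  qed
  have "inj_on pick (parts S)"
  proof (rule inj_onI)
    fix A B assume AB: "A \<in> parts S" "B \<in> parts S" "pick A = pick B"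
    then have "A \<inter> B \<noteq> {}"
      using pick by (metis disjoint_iff)
    with AB(1,2) show "A = B"
      using polestar_parts_eq[OF assms(1)] unfolding parts_def by blast
  qed
  moreover have "pick ` parts S \<subseteq> X"
  proof
    fix x assume "x \<in> pick ` parts S"
    then obtain A H where "x = pick A" "A \<in> parts S" "(A, H) \<in> S"
      unfolding parts_def by blast
    then show "x \<in> X"
      using pick polestar_pairD(1)[OF assms(1)] by blast
  qed
  ultimately show ?thesis
    using card_inj_on_le assms(2) by blast
qed

lemma polestar_card_nonhull_parts_le:
  assumes "polestar_system X S" and "finite X"
  shows "card (nonhull_parts S) \<le> card X"
  using card_mono[OF polestar_finite_parts[OF assms], of "nonhull_parts S"]
    polestar_card_parts_le[OF assms] unfolding nonhull_parts_def by auto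

lemma polestar_nonhull_parts_ne:
  assumes "polestar_system X S" and "X \<noteq> {}"
  shows "nonhull_parts S \<noteq> {}"
proof -
  obtain x where "x \<in> X"
    using assms(2) by blast
  then obtain A H where AH: "(A, H) \<in> S"
    by (rule polestar_covers[OF assms(1)])
  show ?thesis
  proof (cases "A \<in> hulls S")
    case True
    then obtain T where TA: "(T, A) \<in> S" and "A \<noteq> {}"
      unfolding hulls_iff by blast
    then have "T \<notin> hulls S"
      by (rule polestar_part_with_hull_not_hull[OF assms(1)])
    with TA have "T \<in> nonhull_parts S"
      unfolding nonhull_parts_iff by blast
    then show ?thesis by blast
  next
    case False
    with AH have "A \<in> nonhull_parts S"
      unfolding nonhull_parts_iff by blast
    then show ?thesis by blast
  qed
qed

locale polestar_refinement =
  fixes X :: "'a set" and S1 S2 :: "'a set_pair set"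
  assumes polestar1: "polestar_system X S1"
    and polestar2: "polestar_system X S2"
    and refines: "sps_le S1 S2"
begin

lemma part_below:
  assumes "(A, H) \<in> S1"
  obtains B K where "(B, K) \<in> S2" and "A \<subseteq> B"
proof -
  obtain B K where BK: "(B, K) \<in> S2" "sp_le (A, H) (B, K)"
    using sps_le_pairD[OF refines assms] .
  show thesis
  proof (cases "A \<union> H \<subseteq> K")
    case True
    moreover have "A \<noteq> {}"
      using polestar_pairD(3)[OF polestar1 assms] .
    ultimately have "(K, {}) \<in> S2"
      using polestar_hull_part[OF polestar2 BK(1)] by blast
    with True show thesis
      using that by blast
  next
    case False
    with BK show thesis
      using that unfolding sp_le_iff by blast
  qed
qed

lemma pair_below_cases:
  assumes "(T, H) \<in> S1" and "H \<noteq> {}"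
  shows "(\<exists>P Q. (P, Q) \<in> S2 \<and> T \<union> H \<subseteq> P) \<or> (\<exists>B. (B, H) \<in> S2 \<and> T \<subseteq> B)"
proof -
  obtain B K where BK: "(B, K) \<in> S2" "sp_le (T, H) (B, K)"
    using sps_le_pairD[OF refines assms(1)] .
  show ?thesis
  proof (cases "T \<union> H \<subseteq> K")
    case True
    with assms(2) have "(K, {}) \<in> S2"
      using polestar_hull_part[OF polestar2 BK(1)] by blast
    with True show ?thesis by blast
  next
    case False
    with BK(2) have "(T, H) = (B, K) \<or> T \<union> H \<subseteq> B \<or> (T \<subset> B \<and> H = K)"
      unfolding sp_le_iff by blast
    with BK(1) show ?thesis by blast
  qed
qed

lemma hull_pair_below:
  assumes "(B, K) \<in> S2" and "K \<in> hulls S1"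
  obtains A where "(A, K) \<in> S1" and "A \<subseteq> B"
proof -
  obtain A where A: "(A, K) \<in> S1" "sp_le (A, K) (B, K)"
    using sps_le_hullD[OF refines assms] .
  have "A \<subseteq> B"
  proof (rule sp_le_same_hull_subset[OF A(2)])
    show "K \<noteq> {}"
      using assms(2) unfolding hulls_def by blast
    show "A \<noteq> {}" and "A \<inter> K = {}"
      using polestar_pairD(3,4)[OF polestar1 A(1)] .
    show "B \<inter> K = {}"
      using polestar_pairD(4)[OF polestar2 assms(1)] .
  qed
  with A(1) show thesis by (rule that)
qed

lemma siblings_not_in_part_with_their_hull:
  assumes AK: "(A, K) \<in> S1" and A'K: "(A', K) \<in> S1" and "A \<noteq> A'" and K_ne: "K \<noteq> {}"
    and BK: "(B, K) \<in> S2" and "A \<subseteq> B" and "A' \<subseteq> B"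
  shows False
proof -
  \<comment> \<open>the other part of \<open>S2\<close> with hull \<open>K\<close> contains a part of \<open>S1\<close> with hull \<open>K\<close>, but both of these lie in \<open>B\<close>\<close>
  obtain B2 where B2: "(B2, K) \<in> S2" "B2 \<noteq> B"
    by (rule polestar_sibling_exists[OF polestar2 BK K_ne])
  have "K \<in> hulls S1"
    using AK K_ne unfolding hulls_iff by blast
  then obtain A'' where A'': "(A'', K) \<in> S1" "A'' \<subseteq> B2"
    by (rule hull_pair_below[OF B2(1)])
  have "A'' = A \<or> A'' = A'"
    using polestar_sibling_cases[OF polestar1 AK A'K A''(1) K_ne \<open>A \<noteq> A'\<close>] .
  moreover have "A'' \<noteq> {}"
    using polestar_pairD(3)[OF polestar1 A''(1)] .
  moreover have "B \<inter> B2 = {}"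
    using polestar_parts_eq[OF polestar2 BK B2(1)] B2(2) by blast
  ultimately show False
    using A''(2) assms(6,7) by blast
qed

lemma part_inside:
  assumes "(B, K) \<in> S2" and "x \<in> B"
  obtains A H where "(A, H) \<in> S1" and "x \<in> A" and "A \<subseteq> B"
proof -
  have "x \<in> X"
    using polestar_pairD(1)[OF polestar2 assms(1)] assms(2) by blast
  then obtain A H where AH: "(A, H) \<in> S1" "x \<in> A"
    by (rule polestar_covers[OF polestar1])
  obtain B' K' where B': "(B', K') \<in> S2" "A \<subseteq> B'"
    by (rule part_below[OF AH(1)])
  have "B' = B"
    using polestar_parts_eq[OF polestar2 B'(1) assms(1)] B'(2) AH(2) assms(2) by blast
  with AH B' show thesis
    using that by blast
qed

lemma hull_meets_nonhull_part:
  assumes TA: "(T, A) \<in> S1" and A_ne: "A \<noteq> {}"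
    and BK: "(B, K) \<in> S2" and B_nonhull: "B \<notin> hulls S2" and AB: "A \<inter> B \<noteq> {}"
  shows "T \<subseteq> B"
proof -
  obtain B' K' where BK': "(B', K') \<in> S2" "sp_le (T, A) (B', K')"
    using sps_le_pairD[OF refines TA] .
  then have "T \<union> A \<subseteq> B' \<or> (A \<subseteq> K' \<and> K' \<noteq> {})"
    using A_ne unfolding sp_le_iff by blast
  then show ?thesis
  proof
    assume "T \<union> A \<subseteq> B'"
    moreover from this have "B' = B"
      using polestar_parts_eq[OF polestar2 BK'(1) BK] AB by blast
    ultimately show ?thesis by blast
  next
    \<comment> \<open>\<open>A\<close> cannot lie in a hull of \<open>S2\<close>, since that hull would be the non-hull part \<open>B\<close>\<close>
    assume A_in: "A \<subseteq> K' \<and> K' \<noteq> {}"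
    then have "(K', {}) \<in> S2"
      using polestar_hull_part[OF polestar2 BK'(1)] by blast
    moreover have "K' \<inter> B \<noteq> {}"
      using A_in AB by blast
    ultimately have "K' = B"
      using polestar_parts_eq[OF polestar2 _ BK] by blast
    with BK'(1) A_in B_nonhull show ?thesis
      unfolding hulls_iff by blast
  qed
qed

lemma nonhull_part_contains:
  assumes "B \<in> nonhull_parts S2"
  obtains T where "T \<in> nonhull_parts S1" and "T \<subseteq> B"
proof -
  obtain K where BK: "(B, K) \<in> S2" and B_nonhull: "B \<notin> hulls S2"
    using assms unfolding nonhull_parts_iff by blast
  obtain x where "x \<in> B"
    using polestar_pairD(3)[OF polestar2 BK] by blast
  then obtain A H where AH: "(A, H) \<in> S1" "x \<in> A" "A \<subseteq> B"
    by (rule part_inside[OF BK])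
  show thesis
  proof (cases "A \<in> hulls S1")
    case False
    with AH show thesis
      using that unfolding nonhull_parts_iff by blast
  next
    case True
    then obtain T where TA: "(T, A) \<in> S1" and A_ne: "A \<noteq> {}"
      unfolding hulls_iff by blast
    have "T \<notin> hulls S1"
      by (rule polestar_part_with_hull_not_hull[OF polestar1 TA A_ne])
    with TA have T_nonhull: "T \<in> nonhull_parts S1"
      unfolding nonhull_parts_iff by blast
    have "T \<subseteq> B"
      using hull_meets_nonhull_part[OF TA A_ne BK B_nonhull] AH(2,3) by blast
    with T_nonhull show thesis by (rule that)
  qed
qed

lemma card_nonhull_parts_le:
  assumes "finite X"
  shows "card (nonhull_parts S2) \<le> card (nonhull_parts S1)"
proof -
  define below where "below B = (SOME T. T \<in> nonhull_parts S1 \<and> T \<subseteq> B)" for B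
  have below: "below B \<in> nonhull_parts S1 \<and> below B \<subseteq> B" if "B \<in> nonhull_parts S2" for B
    using nonhull_part_contains[OF that] unfolding below_def by (metis (no_types, lifting) someI)
  have "inj_on below (nonhull_parts S2)"
  proof (rule inj_onI)
    fix B B' assume B: "B \<in> nonhull_parts S2" "B' \<in> nonhull_parts S2" "below B = below B'"
    obtain K K' where "(B, K) \<in> S2" "(B', K') \<in> S2"
      using B(1,2) unfolding nonhull_parts_iff by blast
    moreover obtain H where "(below B, H) \<in> S1"
      using below[OF B(1)] unfolding nonhull_parts_iff by blast
    then have "below B \<noteq> {}"
      using polestar_pairD(3)[OF polestar1] by blast
    then have "B \<inter> B' \<noteq> {}"
      using below[OF B(1)] below[OF B(2)] B(3) by blast
    ultimately show "B = B'"
      using polestar_parts_eq[OF polestar2] by blast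
  qed
  moreover have "below ` nonhull_parts S2 \<subseteq> nonhull_parts S1"
    using below by blast
  ultimately show ?thesis
    using card_inj_on_le polestar_finite_nonhull_parts[OF polestar1 assms] by blast
qed

end

section \<open>Merging parts\<close>

text \<open>The parts of the pairs in \<open>D\<close> are fused into one part with hull \<open>K\<close>.  A hull
  other than \<open>K\<close> disappears exactly when its pairs are fused, and then its own part is
  fused too; a nonempty \<open>K\<close> is the hull of exactly one fused pair, whose place the fused
  part takes.\<close>

locale polestar_merge =
  fixes X :: "'a set" and S D :: "'a set_pair set" and K :: "'a set"
  assumes polestar: "polestar_system X S"
    and merged_sub: "D \<subseteq> S"
    and two_le_card: "2 \<le> card D"
    and hull_disjoint: "\<Union>(fst ` D) \<inter> K = {}"
    and hull_closed: "\<And>A H. (A, H) \<in> S \<Longrightarrow> H \<noteq> {} \<Longrightarrow> H \<noteq> K \<Longrightarrow> (A, H) \<in> D \<longleftrightarrow> (H, {}) \<in> D"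
    and hull_part_kept: "K \<noteq> {} \<Longrightarrow> (K, {}) \<in> S - D"
    and hull_pair_merged: "K \<noteq> {} \<Longrightarrow> \<exists>A. (A, K) \<in> D"
    and hull_pair_unique: "\<And>A B. (A, K) \<in> D \<Longrightarrow> (B, K) \<in> D \<Longrightarrow> K \<noteq> {} \<Longrightarrow> A = B"
begin

definition merged_part :: "'a set" where
  "merged_part = \<Union>(fst ` D)"

definition merged :: "'a set_pair set" where
  "merged = insert (merged_part, K) (S - D)"

lemma two_merged_pairs:
  obtains p q where "p \<in> D" and "q \<in> D" and "p \<noteq> q"
proof -
  have "finite D"
    using two_le_card card_gt_0_iff by fastforce
  moreover have "\<not> card D \<le> Suc 0"
    using two_le_card by simp
  ultimately show thesis
    using that card_le_Suc0_iff_eq by blast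
qed

lemma merged_memberE:
  assumes "(A, H) \<in> merged"
  obtains "A = merged_part" and "H = K" | "(A, H) \<in> S" and "(A, H) \<notin> D"
  using assms unfolding merged_def by blast

lemma part_subset_merged_part:
  assumes "(A, H) \<in> D"
  shows "A \<subseteq> merged_part"
  using assms unfolding merged_part_def by force

lemma meets_merged_part:
  assumes "(A, H) \<in> S" and "A \<inter> merged_part \<noteq> {}"
  shows "(A, H) \<in> D"
proof -
  obtain C h where Ch: "(C, h) \<in> D" and "A \<inter> C \<noteq> {}"
    using assms(2) unfolding merged_part_def by force
  then have "C = A"
    using polestar_parts_eq[OF polestar assms(1)] merged_sub by blast
  with Ch have "h = H"
    using polestar_hull_unique[OF polestar assms(1)] merged_sub by blast
  with Ch \<open>C = A\<close> show ?thesis by simp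
qed

lemma merged_part_not_part: "(merged_part, h) \<notin> S"
proof
  assume Uh: "(merged_part, h) \<in> S"
  obtain p q where "p \<in> D" "q \<in> D" "p \<noteq> q"
    by (rule two_merged_pairs)
  then obtain C c where Cc: "(C, c) \<in> D" "(C, c) \<noteq> (merged_part, h)"
    by (metis prod.collapse)
  have "C \<noteq> {}" and "C \<subseteq> merged_part"
    using polestar_pairD(3)[OF polestar] merged_sub Cc(1) part_subset_merged_part by blast+
  then have "C = merged_part"
    using polestar_parts_eq[OF polestar _ Uh] merged_sub Cc(1) by blast
  with Cc show False
    using polestar_hull_unique[OF polestar Uh] merged_sub by blast
qed

lemma merged_part_ne: "merged_part \<noteq> {}"
proof -
  obtain p where "p \<in> D"
    using two_merged_pairs by blast
  then show ?thesis
    using part_subset_merged_part[of "fst p" "snd p"] polestar_pairD(3)[OF polestar, of "fst p" "snd p"]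
      merged_sub by auto
qed

lemma hull_siblings_merged:
  assumes "K \<noteq> {}"
  obtains B where "(B, K) \<in> S" and "(B, K) \<notin> D" and "{C. (C, K) \<in> merged} = {merged_part, B}"
proof -
  obtain A where AK: "(A, K) \<in> D"
    using hull_pair_merged[OF assms] by blast
  with merged_sub have "(A, K) \<in> S" by blast
  then obtain B where "B \<noteq> A" and siblings: "{C. (C, K) \<in> S} = {A, B}"
    by (rule polestar_siblings[OF polestar _ assms])
  then have in_S: "(C, K) \<in> S \<longleftrightarrow> C = A \<or> C = B" for C
    by (simp add: set_eq_iff)
  have BK: "(B, K) \<in> S"
    using in_S by simp
  have B_kept: "(B, K) \<notin> D"
    using hull_pair_unique[OF AK _ assms] \<open>B \<noteq> A\<close> by blast
  have "(C, K) \<in> merged \<longleftrightarrow> C = merged_part \<or> C = B" for C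
  proof
    assume "(C, K) \<in> merged"
    then have "C = merged_part \<or> ((C, K) \<in> S \<and> (C, K) \<notin> D)"
      unfolding merged_def by blast
    then show "C = merged_part \<or> C = B"
    proof
      assume "(C, K) \<in> S \<and> (C, K) \<notin> D"
      with in_S AK show ?thesis by auto
    qed simp
  next
    assume "C = merged_part \<or> C = B"
    with BK B_kept show "(C, K) \<in> merged"
      unfolding merged_def by blast
  qed
  then have "{C. (C, K) \<in> merged} = {merged_part, B}"
    by blast
  with BK B_kept show thesis by (rule that)
qed

lemma other_hull_siblings_merged:
  assumes "(A, H) \<in> S" and "(A, H) \<notin> D" and "H \<noteq> {}" and "H \<noteq> K"
  shows "{C. (C, H) \<in> merged} = {C. (C, H) \<in> S}"
proof -
  have "(H, {}) \<notin> D"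
    using hull_closed[OF assms(1,3,4)] assms(2) by blast
  then have "(C, H) \<notin> D" if "(C, H) \<in> S" for C
    using hull_closed[OF that assms(3,4)] by blast
  then show ?thesis
    using assms(4) unfolding merged_def by blast
qed

lemma Union_parts_merged: "\<Union>(parts merged) = X"
proof -
  have "\<Union>(parts merged) = \<Union>(parts S)"
  proof (intro equalityI subsetI)
    fix x assume "x \<in> \<Union>(parts merged)"
    then obtain A H where "(A, H) \<in> merged" "x \<in> A"
      unfolding parts_def by blast
    then show "x \<in> \<Union>(parts S)"
      using merged_sub unfolding merged_def merged_part_def parts_def by force
  next
    fix x assume "x \<in> \<Union>(parts S)"
    then obtain A H where AH: "(A, H) \<in> S" "x \<in> A"
      unfolding parts_def by blast
    show "x \<in> \<Union>(parts merged)"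
    proof (cases "(A, H) \<in> D")
      case True
      then have "x \<in> merged_part"
        using AH(2) part_subset_merged_part by blast
      then show ?thesis
        unfolding merged_def parts_def by blast
    next
      case False
      with AH show ?thesis
        unfolding merged_def parts_def by blast
    qed
  qed
  then show ?thesis
    using polestar_partition[OF polestar] unfolding is_partition_def by simp
qed

lemma hull_axiom_merged:
  assumes AH: "(A, H) \<in> merged" and H_ne: "H \<noteq> {}"
  shows "(H, {}) \<in> merged \<and> (\<exists>B. B \<noteq> A \<and> {C. (C, H) \<in> merged} = {A, B})"
proof (cases "H = K")
  case True
  obtain B where BK: "(B, K) \<in> S" "(B, K) \<notin> D" and siblings: "{C. (C, K) \<in> merged} = {merged_part, B}"
    using hull_siblings_merged H_ne True by blast
  have "B \<noteq> merged_part"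
    using BK(1) merged_part_not_part by blast
  moreover have "A = merged_part \<or> A = B"
    using AH True siblings by blast
  moreover have "(K, {}) \<in> merged"
    using hull_part_kept H_ne True unfolding merged_def by blast
  ultimately show ?thesis
    using siblings True by blast
next
  case False
  with AH have AH_S: "(A, H) \<in> S" and "(A, H) \<notin> D"
    unfolding merged_def by blast+
  moreover have "(H, {}) \<in> S"
    using polestar_hull_part[OF polestar AH_S H_ne] .
  ultimately have "(H, {}) \<in> merged"
    using hull_closed[OF AH_S H_ne False] unfolding merged_def by blast
  moreover obtain B where "B \<noteq> A" "{C. (C, H) \<in> S} = {A, B}"
    by (rule polestar_siblings[OF polestar AH_S H_ne])
  ultimately show ?thesis
    using other_hull_siblings_merged[OF AH_S \<open>(A, H) \<notin> D\<close> H_ne False] by blast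
qed

lemma polestar_merged: "polestar_system X merged"
proof (rule polestar_systemI[OF _ Union_parts_merged _ hull_axiom_merged])
  fix A H assume "(A, H) \<in> merged"
  then show "A \<noteq> {} \<and> A \<inter> H = {}"
  proof (rule merged_memberE)
    assume "A = merged_part" and "H = K"
    then show ?thesis
      using merged_part_ne hull_disjoint unfolding merged_part_def by simp
  next
    assume "(A, H) \<in> S"
    then show ?thesis
      using polestar_pairD(3,4)[OF polestar] by blast
  qed
next
  fix A H B H' assume AH: "(A, H) \<in> merged" and BH': "(B, H') \<in> merged" and meet: "A \<inter> B \<noteq> {}"
  show "A = B \<and> H = H'"
  proof (cases "(A, H) = (merged_part, K) \<or> (B, H') = (merged_part, K)")
    case True
    with AH BH' meet show ?thesis
      using meets_merged_part unfolding merged_def by blast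
  next
    case False
    with AH BH' have "(A, H) \<in> S" "(B, H') \<in> S"
      unfolding merged_def by blast+
    with meet show ?thesis
      using polestar_parts_eq[OF polestar] polestar_hull_unique[OF polestar] by blast
  qed
qed

lemma parts_merged: "parts merged = insert merged_part (parts S - fst ` D)"
proof (intro equalityI subsetI)
  fix A assume "A \<in> parts merged"
  then obtain H where "(A, H) \<in> merged"
    unfolding parts_def by blast
  then show "A \<in> insert merged_part (parts S - fst ` D)"
  proof (rule merged_memberE)
    assume AH: "(A, H) \<in> S" and "(A, H) \<notin> D"
    moreover have "(A, H') \<in> D \<Longrightarrow> H' = H" for H'
      using polestar_hull_unique[OF polestar AH] merged_sub by blast
    ultimately show ?thesis
      unfolding parts_def by force
  qed simp
next
  fix A assume "A \<in> insert merged_part (parts S - fst ` D)"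
  then consider "A = merged_part" | H where "(A, H) \<in> S" and "(A, H) \<notin> D"
    unfolding parts_def by force
  then show "A \<in> parts merged"
    by cases (auto simp: parts_def merged_def)
qed

lemma hulls_merged: "hulls merged = hulls S - fst ` D"
proof (intro equalityI subsetI)
  fix H assume "H \<in> hulls merged"
  then obtain A where AH: "(A, H) \<in> merged" and H_ne: "H \<noteq> {}"
    unfolding hulls_iff by blast
  from AH show "H \<in> hulls S - fst ` D"
  proof (rule merged_memberE)
    assume "H = K"
    then obtain A' where "(A', K) \<in> D"
      using hull_pair_merged H_ne by blast
    then have "H \<in> hulls S"
      using merged_sub H_ne \<open>H = K\<close> unfolding hulls_iff by blast
    moreover have "(H, h) \<notin> D" for h
      using hull_part_kept H_ne \<open>H = K\<close> polestar_hull_unique[OF polestar] merged_sub by blast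
    ultimately show ?thesis by force
  next
    assume AH_S: "(A, H) \<in> S" and "(A, H) \<notin> D"
    then have "H \<in> hulls S"
      using H_ne unfolding hulls_iff by blast
    moreover have "(H, {}) \<notin> D"
      using hull_closed[OF AH_S H_ne] \<open>(A, H) \<notin> D\<close> hull_part_kept H_ne by blast
    then have "(H, h) \<notin> D" for h
      using polestar_hull_unique[OF polestar polestar_hull_part[OF polestar AH_S H_ne]] merged_sub
      by blast
    ultimately show ?thesis by force
  qed
next
  fix H assume H: "H \<in> hulls S - fst ` D"
  then obtain A where AH: "(A, H) \<in> S" and H_ne: "H \<noteq> {}"
    unfolding Diff_iff hulls_iff by blast
  from H have "H \<notin> fst ` D"
    by blast
  then have "(H, {}) \<notin> D"
    by force
  show "H \<in> hulls merged"
  proof (cases "H = K")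
    case True
    with H_ne show ?thesis
      unfolding hulls_iff merged_def by blast
  next
    case False
    with AH H_ne \<open>(H, {}) \<notin> D\<close> have "(A, H) \<in> merged"
      using hull_closed unfolding merged_def by blast
    with H_ne show ?thesis
      unfolding hulls_iff by blast
  qed
qed

lemma nonhull_parts_merged:
  "nonhull_parts merged = insert merged_part (nonhull_parts S - fst ` D)"
proof -
  have "merged_part \<notin> hulls S"
    using merged_part_not_part polestar_hulls_subset_parts[OF polestar] unfolding parts_def by blast
  then show ?thesis
    unfolding nonhull_parts_def parts_merged hulls_merged by blast
qed

lemma card_nonhull_parts_merged:
  assumes "finite X"
  shows "card (nonhull_parts merged) + card (nonhull_parts S \<inter> fst ` D) = card (nonhull_parts S) + 1"
proof -
  have fin: "finite (nonhull_parts S)"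
    using polestar_finite_nonhull_parts[OF polestar assms] .
  have "merged_part \<notin> nonhull_parts S"
    using merged_part_not_part unfolding nonhull_parts_iff by blast
  then have "card (nonhull_parts merged) = card (nonhull_parts S - fst ` D) + 1"
    unfolding nonhull_parts_merged using fin by simp
  with card_Int_Diff[OF fin, of "fst ` D"] show ?thesis
    by simp
qed

lemma pair_le_merged:
  assumes "(A, H) \<in> D"
  shows "sp_le (A, H) (merged_part, K)"
proof -
  have A_sub: "A \<subseteq> merged_part"
    using part_subset_merged_part[OF assms] .
  have AH: "(A, H) \<in> S"
    using assms merged_sub by blast
  consider "H = {}" | "H = K" "K \<noteq> {}" | "H \<noteq> {}" "H \<noteq> K"
    by blast
  then show ?thesis
  proof cases
    case 1
    with A_sub show ?thesis
      unfolding sp_le_iff by blast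
  next
    case 2
    have "A \<noteq> merged_part"
      using AH merged_part_not_part by blast
    with A_sub 2 show ?thesis
      unfolding sp_le_iff by blast
  next
    case 3
    then have "(H, {}) \<in> D"
      using hull_closed[OF AH] assms by blast
    then have "H \<subseteq> merged_part"
      by (rule part_subset_merged_part)
    with A_sub show ?thesis
      unfolding sp_le_iff by blast
  qed
qed

lemma le_merged: "sps_le S merged"
proof (rule sps_leI)
  fix A H assume AH: "(A, H) \<in> S"
  show "\<exists>B K'. (B, K') \<in> merged \<and> sp_le (A, H) (B, K')"
  proof (cases "(A, H) \<in> D")
    case True
    then show ?thesis
      using pair_le_merged unfolding merged_def by blast
  next
    case False
    with AH show ?thesis
      using sp_le_refl unfolding merged_def by blast
  qed
next
  fix B H A assume BH: "(B, H) \<in> merged" and H_ne: "H \<noteq> {}"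
  from BH show "\<exists>A'. (A', H) \<in> S \<and> sp_le (A', H) (B, H)"
  proof (rule merged_memberE)
    assume "B = merged_part" and "H = K"
    moreover obtain A' where "(A', K) \<in> D"
      using hull_pair_merged H_ne \<open>H = K\<close> by blast
    ultimately show ?thesis
      using pair_le_merged merged_sub by blast
  next
    assume "(B, H) \<in> S"
    then show ?thesis
      using sp_le_refl by blast
  qed
qed

lemma merged_pair_surviving_hull:
  assumes AH: "(A, H) \<in> D" and "H \<in> hulls merged"
  shows "H = K"
proof (rule ccontr)
  assume "H \<noteq> K"
  have "H \<noteq> {}" and "H \<notin> fst ` D"
    using assms(2) unfolding hulls_merged by (auto simp: hulls_iff)
  then have "(H, {}) \<notin> D"
    by force
  with AH \<open>H \<noteq> {}\<close> \<open>H \<noteq> K\<close> show False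
    using hull_closed merged_sub by blast
qed

lemma merged_le:
  assumes T: "polestar_system X T" and le: "sps_le S T"
    and PQ: "(P, Q) \<in> T" and merged_sub_P: "merged_part \<subseteq> P" and Q: "K \<noteq> {} \<Longrightarrow> Q = K"
  shows "sps_le merged T"
proof -
  have merged_le_PQ: "sp_le (merged_part, K) (P, Q)"
    using merged_sub_P Q unfolding sp_le_iff by (cases "K = {}") auto
  show ?thesis
  proof (rule sps_leI)
    fix A H assume "(A, H) \<in> merged"
    then show "\<exists>B K'. (B, K') \<in> T \<and> sp_le (A, H) (B, K')"
    proof (rule merged_memberE)
      assume "A = merged_part" and "H = K"
      with PQ merged_le_PQ show ?thesis by blast
    next
      assume "(A, H) \<in> S"
      then show ?thesis
        using sps_le_pairD[OF le] by metis
    qed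
  next
    fix B H A assume BH: "(B, H) \<in> T" and H_ne: "H \<noteq> {}" and "(A, H) \<in> merged"
    then have "H \<in> hulls merged"
      unfolding hulls_iff by blast
    then have H_hull: "H \<in> hulls S"
      unfolding hulls_merged by blast
    obtain A' where A'H: "(A', H) \<in> S" and A'_le: "sp_le (A', H) (B, H)"
      by (rule sps_le_hullD[OF le BH H_hull])
    show "\<exists>A'. (A', H) \<in> merged \<and> sp_le (A', H) (B, H)"
    proof (cases "(A', H) \<in> D")
      case False
      with A'H A'_le show ?thesis
        unfolding merged_def by blast
    next
      \<comment> \<open>then the pair of \<open>T\<close> with hull \<open>K\<close> above \<open>A'\<close> must be \<open>(P, Q)\<close>\<close>
      case True
      then have "H = K"
        using merged_pair_surviving_hull \<open>H \<in> hulls merged\<close> by blast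
      have "A' \<subseteq> B"
        using sp_le_same_hull_subset[OF A'_le H_ne] polestar_pairD(3,4)[OF polestar A'H]
          polestar_pairD(4)[OF T BH] by blast
      moreover have "A' \<subseteq> P" and "A' \<noteq> {}"
        using part_subset_merged_part[OF True] merged_sub_P polestar_pairD(3)[OF polestar A'H]
        by blast+
      ultimately have "B = P"
        using polestar_parts_eq[OF T BH PQ] by blast
      with \<open>H = K\<close> H_ne Q merged_le_PQ show ?thesis
        unfolding merged_def by blast
    qed
  qed
qed

end

section \<open>Attaching a common hull to two free parts\<close>

locale polestar_attach =
  fixes X :: "'a set" and S :: "'a set_pair set" and Fa Fb K :: "'a set"
  assumes polestar: "polestar_system X S"
    and free_a: "(Fa, {}) \<in> S" and free_b: "(Fb, {}) \<in> S" and free_K: "(K, {}) \<in> S"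
    and nonhull_a: "Fa \<notin> hulls S" and nonhull_b: "Fb \<notin> hulls S" and nonhull_K: "K \<notin> hulls S"
    and distinct: "Fa \<noteq> Fb" "Fa \<noteq> K" "Fb \<noteq> K"
begin

definition attached :: "'a set_pair set" where
  "attached = (S - {(Fa, {}), (Fb, {})}) \<union> {(Fa, K), (Fb, K)}"

lemma attached_iff:
  "(A, H) \<in> attached \<longleftrightarrow> ((A = Fa \<or> A = Fb) \<and> H = K) \<or> ((A, H) \<in> S \<and> A \<noteq> Fa \<and> A \<noteq> Fb)"
proof -
  have "(A, H) \<in> S \<Longrightarrow> A = Fa \<or> A = Fb \<Longrightarrow> H = {}"
    using polestar_hull_unique[OF polestar] free_a free_b by blast
  then show ?thesis
    unfolding attached_def by auto
qed

lemma no_pair_with_hull_K: "(A, K) \<notin> S"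
  using nonhull_K polestar_pairD(3)[OF polestar free_K] unfolding hulls_iff by blast

lemma pair_with_hull_kept:
  assumes "(A, H) \<in> S" and "H \<noteq> {}"
  shows "(A, H) \<in> attached"
proof -
  have "A \<noteq> Fa" and "A \<noteq> Fb"
    using polestar_hull_unique[OF polestar assms(1)] free_a free_b assms(2) by blast+
  with assms(1) show ?thesis
    unfolding attached_iff by blast
qed

lemma parts_attached: "parts attached = parts S"
proof -
  have "(\<exists>H. (A, H) \<in> attached) \<longleftrightarrow> (\<exists>H. (A, H) \<in> S)" for A
  proof
    assume "\<exists>H. (A, H) \<in> attached"
    then obtain H where "(A, H) \<in> attached" ..
    then show "\<exists>H. (A, H) \<in> S"
      using free_a free_b unfolding attached_iff by blast
  next
    assume "\<exists>H. (A, H) \<in> S"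
    then obtain H where "(A, H) \<in> S" ..
    then have "(A, H) \<in> attached \<or> (A, K) \<in> attached"
      unfolding attached_iff by blast
    then show "\<exists>H. (A, H) \<in> attached" by blast
  qed
  then show ?thesis
    unfolding parts_def by blast
qed

lemma hulls_attached: "hulls attached = insert K (hulls S)"
proof (intro equalityI subsetI)
  fix H assume "H \<in> hulls attached"
  then obtain A where "(A, H) \<in> attached" and "H \<noteq> {}"
    unfolding hulls_iff by blast
  then show "H \<in> insert K (hulls S)"
    unfolding attached_iff by (auto simp: hulls_iff)
next
  fix H assume "H \<in> insert K (hulls S)"
  then consider "H = K" | A where "(A, H) \<in> S" and "H \<noteq> {}"
    by (auto simp: hulls_iff)
  then show "H \<in> hulls attached"
  proof cases
    case 1
    moreover have "(Fa, K) \<in> attached"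
      unfolding attached_iff by blast
    ultimately show ?thesis
      using polestar_pairD(3)[OF polestar free_K] unfolding hulls_iff by blast
  next
    case 2
    then show ?thesis
      using pair_with_hull_kept unfolding hulls_iff by blast
  qed
qed

lemma nonhull_parts_attached: "nonhull_parts attached = nonhull_parts S - {K}"
  unfolding nonhull_parts_def parts_attached hulls_attached by blast

lemma polestar_attached: "polestar_system X attached"
proof (rule polestar_systemI)
  fix A H assume "(A, H) \<in> attached"
  moreover have "Fa \<inter> K = {}" and "Fb \<inter> K = {}"
    using polestar_parts_eq[OF polestar] free_a free_b free_K distinct by blast+
  ultimately show "A \<noteq> {} \<and> A \<inter> H = {}"
    using polestar_pairD(3,4)[OF polestar] free_a free_b unfolding attached_iff by blast
next
  show "\<Union>(parts attached) = X"
    using polestar_partition[OF polestar] unfolding parts_attached is_partition_def by blast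
next
  fix A H B H' assume AH: "(A, H) \<in> attached" and BH': "(B, H') \<in> attached" and "A \<inter> B \<noteq> {}"
  moreover have "A \<in> parts S" and "B \<in> parts S"
    using AH BH' parts_attached unfolding parts_def by blast+
  ultimately have "A = B"
    using polestar_parts_eq[OF polestar] unfolding parts_def by blast
  with AH BH' show "A = B \<and> H = H'"
    using polestar_hull_unique[OF polestar] unfolding attached_iff by blast
next
  fix A H assume AH: "(A, H) \<in> attached" and H_ne: "H \<noteq> {}"
  show "(H, {}) \<in> attached \<and> (\<exists>B. B \<noteq> A \<and> {C. (C, H) \<in> attached} = {A, B})"
  proof (cases "H = K")
    case True
    have "{C. (C, K) \<in> attached} = {Fa, Fb}"
      using no_pair_with_hull_K unfolding attached_iff by blast
    moreover have "(K, {}) \<in> attached"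
      using free_K distinct unfolding attached_iff by blast
    moreover have "A = Fa \<or> A = Fb"
      using AH True no_pair_with_hull_K unfolding attached_iff by blast
    ultimately show ?thesis
      using True distinct(1) by blast
  next
    case False
    with AH have AH_S: "(A, H) \<in> S"
      unfolding attached_iff by blast
    have "H \<in> hulls S"
      using AH_S H_ne unfolding hulls_iff by blast
    then have "(H, {}) \<in> attached"
      using polestar_hull_part[OF polestar AH_S H_ne] nonhull_a nonhull_b unfolding attached_iff by blast
    moreover have "{C. (C, H) \<in> attached} = {C. (C, H) \<in> S}"
      using polestar_hull_unique[OF polestar] free_a free_b H_ne False unfolding attached_iff by blast
    moreover obtain B where "B \<noteq> A" "{C. (C, H) \<in> S} = {A, B}"
      by (rule polestar_siblings[OF polestar AH_S H_ne])
    ultimately show ?thesis by blast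
  qed
qed

lemma le_attached: "sps_le S attached"
proof (rule sps_leI)
  fix A H assume AH: "(A, H) \<in> S"
  show "\<exists>B K'. (B, K') \<in> attached \<and> sp_le (A, H) (B, K')"
  proof (cases "A = Fa \<or> A = Fb")
    case True
    then have "H = {}"
      using polestar_hull_unique[OF polestar AH] free_a free_b by blast
    with True have "(A, K) \<in> attached" and "sp_le (A, H) (A, K)"
      unfolding attached_iff sp_le_iff by auto
    then show ?thesis by blast
  next
    case False
    with AH show ?thesis
      using sp_le_refl unfolding attached_iff by blast
  qed
next
  fix B H A assume BH: "(B, H) \<in> attached" and "H \<noteq> {}" and "(A, H) \<in> S"
  then have "(B, H) \<in> S"
    using no_pair_with_hull_K unfolding attached_iff by blast
  then show "\<exists>A'. (A', H) \<in> S \<and> sp_le (A', H) (B, H)"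
    using sp_le_refl by blast
qed

lemma attached_le:
  assumes T: "polestar_system X T" and le: "sps_le S T"
    and attached_a: "(Fa, K) \<in> T" and attached_b: "(Fb, K) \<in> T"
  shows "sps_le attached T"
proof (rule sps_leI)
  fix A H assume "(A, H) \<in> attached"
  then consider "(A, H) \<in> T" | "(A, H) \<in> S"
    using attached_a attached_b unfolding attached_iff by blast
  then show "\<exists>B K'. (B, K') \<in> T \<and> sp_le (A, H) (B, K')"
    by cases (use sp_le_refl sps_le_pairD[OF le] in metis)+
next
  fix B H A assume BH: "(B, H) \<in> T" and H_ne: "H \<noteq> {}" and "(A, H) \<in> attached"
  then have "H \<in> hulls attached"
    unfolding hulls_iff by blast
  show "\<exists>A'. (A', H) \<in> attached \<and> sp_le (A', H) (B, H)"
  proof (cases "H = K")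
    case True
    with BH have "B = Fa \<or> B = Fb"
      using polestar_sibling_cases[OF T attached_a attached_b] H_ne distinct(1) by blast
    with True have "(B, H) \<in> attached"
      unfolding attached_iff by blast
    then show ?thesis
      using sp_le_refl by blast
  next
    case False
    with \<open>H \<in> hulls attached\<close> have "H \<in> hulls S"
      unfolding hulls_attached by blast
    then obtain A' where A'H: "(A', H) \<in> S" and "sp_le (A', H) (B, H)"
      by (rule sps_le_hullD[OF le BH])
    moreover have "A' \<noteq> Fa" and "A' \<noteq> Fb"
      using polestar_hull_unique[OF polestar A'H] free_a free_b H_ne by blast+
    ultimately show ?thesis
      unfolding attached_iff by blast
  qed
qed

end

section \<open>Intermediate systems\<close>

context polestar_refinement
begin

definition intermediate :: "'a set_pair set \<Rightarrow> bool" where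
  "intermediate S3 \<longleftrightarrow> polestar_system X S3 \<and> sps_le S1 S3 \<and> sps_le S3 S2 \<and>
     card (nonhull_parts S3) + 1 = card (nonhull_parts S1)"

lemma intermediate_merged:
  assumes "finite X" and merge: "polestar_merge X S1 D K"
    and two_nonhull: "card (nonhull_parts S1 \<inter> fst ` D) = 2"
    and PQ: "(P, Q) \<in> S2" and "\<Union>(fst ` D) \<subseteq> P" and "K \<noteq> {} \<Longrightarrow> Q = K"
  shows "\<exists>S3. intermediate S3"
proof -
  interpret polestar_merge X S1 D K
    by (rule merge)
  have "intermediate merged"
    unfolding intermediate_def
    using polestar_merged le_merged merged_le[OF polestar2 refines PQ _ assms(6)] assms(5)
      card_nonhull_parts_merged[OF assms(1)] two_nonhull unfolding merged_part_def by simp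
  then show ?thesis ..
qed

lemma intermediate_merge_free_parts:
  assumes "finite X"
    and F: "(F, {}) \<in> S1" and F': "(F', {}) \<in> S1" and "F \<noteq> F'"
    and "F \<notin> hulls S1" and "F' \<notin> hulls S1"
    and PQ: "(P, Q) \<in> S2" and "F \<union> F' \<subseteq> P"
  shows "\<exists>S3. intermediate S3"
proof (rule intermediate_merged[OF assms(1) _ _ PQ])
  let ?D = "{(F, {}), (F', {})}"
  show "polestar_merge X S1 ?D {}"
  proof
    fix A H assume "(A, H) \<in> S1" and "H \<noteq> {}"
    then have "H \<in> hulls S1"
      unfolding hulls_iff by blast
    with \<open>H \<noteq> {}\<close> assms(5,6) show "(A, H) \<in> ?D \<longleftrightarrow> (H, {}) \<in> ?D"
      by blast
  qed (use polestar1 F F' \<open>F \<noteq> F'\<close> in auto)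
  have "F \<in> nonhull_parts S1" and "F' \<in> nonhull_parts S1"
    using F F' assms(5,6) unfolding nonhull_parts_iff by blast+
  then have "nonhull_parts S1 \<inter> fst ` ?D = {F, F'}"
    by auto
  then show "card (nonhull_parts S1 \<inter> fst ` ?D) = 2"
    using \<open>F \<noteq> F'\<close> by simp
  show "\<Union>(fst ` ?D) \<subseteq> P"
    using assms(8) by simp
qed simp

lemma intermediate_merge_siblings:
  assumes "finite X"
    and Ta: "(Ta, H) \<in> S1" and Tb: "(Tb, H) \<in> S1" and "Ta \<noteq> Tb" and H_ne: "H \<noteq> {}"
    and PQ: "(P, Q) \<in> S2" and "Ta \<union> Tb \<union> H \<subseteq> P"
  shows "\<exists>S3. intermediate S3"
proof (rule intermediate_merged[OF assms(1) _ _ PQ])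
  let ?D = "{(Ta, H), (Tb, H), (H, {})}"
  have H: "(H, {}) \<in> S1"
    by (rule polestar_hull_part[OF polestar1 Ta H_ne])
  have "Ta \<noteq> H" and "Tb \<noteq> H"
    using polestar_hull_unique[OF polestar1] Ta Tb H H_ne by blast+
  show "polestar_merge X S1 ?D {}"
  proof
    show "2 \<le> card ?D"
      using \<open>Ta \<noteq> Tb\<close> H_ne by simp
  next
    fix A H' assume AH': "(A, H') \<in> S1" and "H' \<noteq> {}"
    show "(A, H') \<in> ?D \<longleftrightarrow> (H', {}) \<in> ?D"
    proof (cases "H' = H")
      case True
      with AH' have "A = Ta \<or> A = Tb"
        using polestar_sibling_cases[OF polestar1 Ta Tb] H_ne \<open>Ta \<noteq> Tb\<close> by blast
      with True show ?thesis by blast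
    next
      case False
      with \<open>H' \<noteq> {}\<close> H_ne show ?thesis by auto
    qed
  qed (use polestar1 Ta Tb H in auto)
  have "Ta \<in> nonhull_parts S1" and "Tb \<in> nonhull_parts S1"
    using Ta Tb polestar_part_with_hull_not_hull[OF polestar1 _ H_ne]
    unfolding nonhull_parts_iff by blast+
  moreover have "H \<notin> nonhull_parts S1"
    using Ta H_ne unfolding nonhull_parts_iff hulls_iff by blast
  ultimately have "nonhull_parts S1 \<inter> fst ` ?D = {Ta, Tb}"
    by auto
  then show "card (nonhull_parts S1 \<inter> fst ` ?D) = 2"
    using \<open>Ta \<noteq> Tb\<close> by simp
  show "\<Union>(fst ` ?D) \<subseteq> P"
    using assms(7) by auto
qed simp

lemma intermediate_merge_into_hull:
  assumes "finite X"
    and T: "(T, H) \<in> S1" and H_ne: "H \<noteq> {}" and F: "(F, {}) \<in> S1" and "F \<notin> hulls S1"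
    and BH: "(B, H) \<in> S2" and "T \<union> F \<subseteq> B"
  shows "\<exists>S3. intermediate S3"
proof (rule intermediate_merged[OF assms(1) _ _ BH])
  let ?D = "{(T, H), (F, {})}"
  have H: "(H, {}) \<in> S1"
    by (rule polestar_hull_part[OF polestar1 T H_ne])
  have "H \<in> hulls S1"
    using T H_ne unfolding hulls_iff by blast
  with \<open>F \<notin> hulls S1\<close> have "F \<noteq> H" by blast
  have "T \<noteq> F"
    using polestar_hull_unique[OF polestar1 T] F H_ne by blast
  show "polestar_merge X S1 ?D H"
  proof
    show "2 \<le> card ?D"
      using \<open>T \<noteq> F\<close> by simp
    show "\<Union>(fst ` ?D) \<inter> H = {}"
      using polestar_pairD(4)[OF polestar1 T] polestar_parts_eq[OF polestar1 F H] \<open>F \<noteq> H\<close> by auto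
  next
    fix A H' assume "(A, H') \<in> S1" and "H' \<noteq> {}" and "H' \<noteq> H"
    then have "H' \<in> hulls S1"
      unfolding hulls_iff by blast
    with \<open>H' \<noteq> {}\<close> \<open>H' \<noteq> H\<close> \<open>F \<notin> hulls S1\<close> H_ne show "(A, H') \<in> ?D \<longleftrightarrow> (H', {}) \<in> ?D"
      by auto
  qed (use polestar1 T F H H_ne \<open>F \<noteq> H\<close> in auto)
  have "T \<notin> hulls S1"
    by (rule polestar_part_with_hull_not_hull[OF polestar1 T H_ne])
  then have "T \<in> nonhull_parts S1" and "F \<in> nonhull_parts S1"
    using T F \<open>F \<notin> hulls S1\<close> unfolding nonhull_parts_iff by blast+
  then have "nonhull_parts S1 \<inter> fst ` ?D = {T, F}"
    by auto
  then show "card (nonhull_parts S1 \<inter> fst ` ?D) = 2"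
    using \<open>T \<noteq> F\<close> by simp
  show "\<Union>(fst ` ?D) \<subseteq> B"
    using assms(7) by simp
qed simp

lemma intermediate_attach_hull:
  assumes "finite X"
    and Fa: "(Fa, {}) \<in> S1" and Fb: "(Fb, {}) \<in> S1" and K: "(K, {}) \<in> S1"
    and "Fa \<notin> hulls S1" and "Fb \<notin> hulls S1" and "K \<notin> hulls S1" and "Fa \<noteq> Fb"
    and FaK: "(Fa, K) \<in> S2" and FbK: "(Fb, K) \<in> S2"
  shows "\<exists>S3. intermediate S3"
proof -
  have "Fa \<noteq> K" and "Fb \<noteq> K"
    using polestar_pairD(3,4)[OF polestar2 FaK] polestar_pairD(3,4)[OF polestar2 FbK] by auto
  then interpret polestar_attach X S1 Fa Fb K
    using assms(2-8) polestar1 by unfold_locales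
  have "K \<in> nonhull_parts S1"
    using K \<open>K \<notin> hulls S1\<close> unfolding nonhull_parts_iff by blast
  moreover have "finite (nonhull_parts S1)"
    by (rule polestar_finite_nonhull_parts[OF polestar1 assms(1)])
  ultimately have "card (nonhull_parts attached) + 1 = card (nonhull_parts S1)"
    unfolding nonhull_parts_attached by (simp add: card_Suc_Diff1 del: card_Diff_insert)
  then have "intermediate attached"
    unfolding intermediate_def
    using polestar_attached le_attached attached_le[OF polestar2 refines FaK FbK] by blast
  then show ?thesis ..
qed

context
  assumes finite: "finite X" and no_intermediate: "\<not> (\<exists>S3. intermediate S3)"
begin

lemma pair_below_same_hull:
  assumes TH: "(T, H) \<in> S1" and H_ne: "H \<noteq> {}"
  obtains B where "(B, H) \<in> S2" and "T \<subseteq> B"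
proof -
  have "\<exists>B. (B, H) \<in> S2 \<and> T \<subseteq> B"
  proof (rule ccontr)
    assume none: "\<not> (\<exists>B. (B, H) \<in> S2 \<and> T \<subseteq> B)"
    then obtain P Q where PQ: "(P, Q) \<in> S2" "T \<union> H \<subseteq> P"
      using pair_below_cases[OF TH H_ne] by blast
    obtain Tb where Tb: "(Tb, H) \<in> S1" "Tb \<noteq> T"
      by (rule polestar_sibling_exists[OF polestar1 TH H_ne])
    show False
    proof (cases "\<exists>B. (B, H) \<in> S2 \<and> Tb \<subseteq> B")
      case True
      then have "(H, {}) \<in> S2"
        using polestar_hull_part[OF polestar2] H_ne by blast
      then have "P = H"
        using polestar_parts_eq[OF polestar2 PQ(1)] PQ(2) H_ne by blast
      with PQ(2) show False
        using polestar_pairD(3,4)[OF polestar1 TH] by blast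
    next
      case False
      then obtain P' Q' where P'Q': "(P', Q') \<in> S2" "Tb \<union> H \<subseteq> P'"
        using pair_below_cases[OF Tb(1) H_ne] by blast
      then have "P' = P"
        using polestar_parts_eq[OF polestar2 P'Q'(1) PQ(1)] PQ(2) H_ne by blast
      with PQ P'Q' have "\<exists>S3. intermediate S3"
        using intermediate_merge_siblings[OF finite TH Tb(1) Tb(2)[symmetric] H_ne] by blast
      with no_intermediate show False ..
    qed
  qed
  then show thesis
    using that by blast
qed

lemma pair_meeting_pair:
  assumes TH: "(T, H) \<in> S1" and H_ne: "H \<noteq> {}" and BK: "(B, K) \<in> S2" and meet: "T \<inter> B \<noteq> {}"
  shows "K = H" and "T \<subseteq> B"
proof -
  obtain B' where B'H: "(B', H) \<in> S2" and "T \<subseteq> B'"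
    by (rule pair_below_same_hull[OF TH H_ne])
  with meet have "B' = B"
    using polestar_parts_eq[OF polestar2 B'H BK] by blast
  with B'H \<open>T \<subseteq> B'\<close> show "K = H" and "T \<subseteq> B"
    using polestar_hull_unique[OF polestar2 BK] by blast+
qed

lemma hull_part_in_S2:
  assumes "H \<in> hulls S1"
  shows "(H, {}) \<in> S2"
proof -
  obtain T where TH: "(T, H) \<in> S1" and H_ne: "H \<noteq> {}"
    using assms unfolding hulls_iff by blast
  obtain B where "(B, H) \<in> S2"
    by (rule pair_below_same_hull[OF TH H_ne])
  then show ?thesis
    using polestar_hull_part[OF polestar2] H_ne by blast
qed

lemma proper_subpart_not_hull:
  assumes "(A, H) \<in> S1" and BK: "(B, K) \<in> S2" and "A \<subseteq> B" and "A \<noteq> B"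
  shows "A \<notin> hulls S1"
proof
  assume A_hull: "A \<in> hulls S1"
  then have "(A, {}) \<in> S2" and A_ne: "A \<noteq> {}"
    using hull_part_in_S2 unfolding hulls_iff by blast+
  with assms(3,4) show False
    using polestar_parts_eq[OF polestar2 _ BK] by blast
qed

lemma proper_subparts_eq:
  assumes Ah: "(A, h) \<in> S1" and A'h': "(A', h') \<in> S1" and BK: "(B, K) \<in> S2"
    and "A \<subset> B" and "A' \<subset> B"
  shows "A = A'"
proof (rule ccontr)
  assume "A \<noteq> A'"
  have nonhull: "A \<notin> hulls S1" "A' \<notin> hulls S1"
    using proper_subpart_not_hull[OF Ah BK] proper_subpart_not_hull[OF A'h' BK] assms(4,5) by blast+
  have "A \<inter> B \<noteq> {}" and "A' \<inter> B \<noteq> {}"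
    using assms(4,5) polestar_pairD(3)[OF polestar1 Ah] polestar_pairD(3)[OF polestar1 A'h'] by blast+
  then have hull_h: "h \<noteq> {} \<Longrightarrow> K = h" and hull_h': "h' \<noteq> {} \<Longrightarrow> K = h'"
    using pair_meeting_pair(1)[OF Ah _ BK] pair_meeting_pair(1)[OF A'h' _ BK] by blast+
  have "A \<subseteq> B" and "A' \<subseteq> B"
    using assms(4,5) by blast+
  consider "h = {}" "h' = {}" | "h = {}" "h' \<noteq> {}" | "h \<noteq> {}" "h' = {}" | "h \<noteq> {}" "h' \<noteq> {}"
    by blast
  then have "\<exists>S3. intermediate S3"
  proof cases
    case 1
    with Ah A'h' \<open>A \<noteq> A'\<close> nonhull BK \<open>A \<subseteq> B\<close> \<open>A' \<subseteq> B\<close> show ?thesis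
      using intermediate_merge_free_parts[OF finite] by blast
  next
    case 2
    with A'h' Ah nonhull(1) BK hull_h' \<open>A \<subseteq> B\<close> \<open>A' \<subseteq> B\<close> show ?thesis
      using intermediate_merge_into_hull[OF finite, of A' h' A B] by blast
  next
    case 3
    with Ah A'h' nonhull(2) BK hull_h \<open>A \<subseteq> B\<close> \<open>A' \<subseteq> B\<close> show ?thesis
      using intermediate_merge_into_hull[OF finite, of A h A' B] by blast
  next
    case 4
    then have "K \<noteq> {}" and "(A, K) \<in> S1" and "(A', K) \<in> S1"
      using Ah A'h' hull_h hull_h' by auto
    with \<open>A \<noteq> A'\<close> BK \<open>A \<subseteq> B\<close> \<open>A' \<subseteq> B\<close> show ?thesis
      using siblings_not_in_part_with_their_hull by blast
  qed
  with no_intermediate show False ..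
qed

lemma part_of_S2_is_part:
  assumes BK: "(B, K) \<in> S2"
  obtains h where "(B, h) \<in> S1"
proof -
  obtain x where "x \<in> B"
    using polestar_pairD(3)[OF polestar2 BK] by blast
  then obtain A h where Ah: "(A, h) \<in> S1" "x \<in> A" "A \<subseteq> B"
    by (rule part_inside[OF BK])
  have "A = B"
  proof (rule ccontr)
    assume "A \<noteq> B"
    then obtain y where "y \<in> B" "y \<notin> A"
      using Ah(3) by blast
    from \<open>y \<in> B\<close> obtain A' h' where A'h': "(A', h') \<in> S1" "y \<in> A'" "A' \<subseteq> B"
      by (rule part_inside[OF BK])
    have "A' \<noteq> B"
      using polestar_parts_eq[OF polestar1 Ah(1) A'h'(1)] Ah(2,3) A'h'(2) \<open>y \<notin> A\<close> by blast
    with Ah A'h' \<open>A \<noteq> B\<close> have "A = A'"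
      using proper_subparts_eq[OF Ah(1) A'h'(1) BK] by blast
    with A'h'(2) \<open>y \<notin> A\<close> show False by blast
  qed
  with Ah(1) show thesis
    using that by blast
qed

lemma free_part_not_attached:
  assumes B: "(B, {}) \<in> S1" and BK: "(B, K) \<in> S2" and K_ne: "K \<noteq> {}" and "K \<notin> hulls S1"
  shows False
proof -
  obtain B2 where B2K: "(B2, K) \<in> S2" and "B \<noteq> B2"
    by (rule polestar_sibling_exists[OF polestar2 BK K_ne]) blast
  obtain h2 where B2: "(B2, h2) \<in> S1"
    by (rule part_of_S2_is_part[OF B2K])
  have "B2 \<noteq> {}"
    using polestar_pairD(3)[OF polestar2 B2K] .
  then have "h2 = {}"
    using pair_meeting_pair(1)[OF B2 _ B2K] B2 \<open>K \<notin> hulls S1\<close> unfolding hulls_iff by blast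
  have K2: "(K, {}) \<in> S2"
    by (rule polestar_hull_part[OF polestar2 BK K_ne])
  obtain k where K: "(K, k) \<in> S1"
    by (rule part_of_S2_is_part[OF K2])
  have "k = {}"
    using pair_meeting_pair(1)[OF K _ K2] K_ne by blast
  have "X' \<notin> hulls S1" if "(X', K) \<in> S2" for X'
    using polestar_hull_unique[OF polestar2 that] hull_part_in_S2 K_ne by blast
  then have "B \<notin> hulls S1" and "B2 \<notin> hulls S1"
    using BK B2K by blast+
  with assms(1,4) B2 K BK B2K \<open>h2 = {}\<close> \<open>k = {}\<close> \<open>B \<noteq> B2\<close> have "\<exists>S3. intermediate S3"
    using intermediate_attach_hull[OF finite] by blast
  with no_intermediate show False ..
qed

lemma pair_of_S2_is_pair:
  assumes BK: "(B, K) \<in> S2"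
  shows "(B, K) \<in> S1"
proof -
  obtain h where Bh: "(B, h) \<in> S1"
    by (rule part_of_S2_is_part[OF BK])
  have B_ne: "B \<noteq> {}"
    using polestar_pairD(3)[OF polestar2 BK] .
  have "h = K"
  proof (cases "h = {}")
    case False
    then show ?thesis
      using pair_meeting_pair(1)[OF Bh False BK] B_ne by blast
  next
    case True
    show ?thesis
    proof (rule ccontr)
      assume "h \<noteq> K"
      with True have K_ne: "K \<noteq> {}" by blast
      show False
      proof (cases "K \<in> hulls S1")
        case True
        then obtain A where AK: "(A, K) \<in> S1" and "A \<subseteq> B"
          by (rule hull_pair_below[OF BK])
        then have "A = B"
          using polestar_parts_eq[OF polestar1 AK Bh] polestar_pairD(3)[OF polestar1 AK] by blast
        with AK Bh \<open>h \<noteq> K\<close> show False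
          using polestar_hull_unique[OF polestar1] by blast
      next
        case False
        with Bh \<open>h = {}\<close> BK K_ne show False
          using free_part_not_attached by blast
      qed
    qed
  qed
  with Bh show ?thesis by simp
qed

lemma refinement_eq: "S1 = S2"
proof
  show "S2 \<subseteq> S1"
    using pair_of_S2_is_pair by auto
  show "S1 \<subseteq> S2"
  proof
    fix p assume "p \<in> S1"
    then obtain A h where p: "p = (A, h)" and Ah: "(A, h) \<in> S1"
      by (metis prod.collapse)
    obtain B K where BK: "(B, K) \<in> S2" and "A \<subseteq> B"
      by (rule part_below[OF Ah])
    have BK1: "(B, K) \<in> S1"
      by (rule pair_of_S2_is_pair[OF BK])
    have "A = B"
      using polestar_parts_eq[OF polestar1 Ah BK1] \<open>A \<subseteq> B\<close> polestar_pairD(3)[OF polestar1 Ah] by blast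
    with BK BK1 Ah p show "p \<in> S2"
      using polestar_hull_unique[OF polestar1] by blast
  qed
qed

end

lemma intermediate_exists:
  assumes "finite X" and "S1 \<noteq> S2"
  obtains S3 where "intermediate S3"
  using refinement_eq[OF assms(1)] assms(2) by blast

lemma card_nonhull_parts_less:
  assumes "finite X" and "S1 \<noteq> S2"
  shows "card (nonhull_parts S2) < card (nonhull_parts S1)"
proof -
  obtain S3 where S3: "intermediate S3"
    by (rule intermediate_exists[OF assms])
  then interpret S3_S2: polestar_refinement X S3 S2
    unfolding intermediate_def using polestar2 by unfold_locales blast+
  show ?thesis
    using S3_S2.card_nonhull_parts_le[OF assms(1)] S3 unfolding intermediate_def by linarith
qed

end

theorem mainTheorem7:
  fixes X :: "'a set" and \<S>1 \<S>2 :: "'a set_pair set"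
  assumes "finite X" and "X \<noteq> {}"
    and "\<S>1 \<in> polestar_systems X" and "\<S>2 \<in> polestar_systems X"
    and "sps_less \<S>1 \<S>2"
  shows "1 \<le> int (card (parts \<S>2)) - int (card (hulls \<S>2))
      \<and> int (card (parts \<S>2)) - int (card (hulls \<S>2))
          < int (card (parts \<S>1)) - int (card (hulls \<S>1))
      \<and> int (card (parts \<S>1)) - int (card (hulls \<S>1)) \<le> int (card X)
      \<and> ((int (card (parts \<S>1)) - int (card (hulls \<S>1)))
           - (int (card (parts \<S>2)) - int (card (hulls \<S>2))) \<ge> 2
         \<longrightarrow> (\<exists>\<S>3 \<in> polestar_systems X. sps_less \<S>1 \<S>3 \<and> sps_less \<S>3 \<S>2))"
proof -
  have p1: "polestar_system X \<S>1" and p2: "polestar_system X \<S>2"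
    using assms(3,4) unfolding polestar_systems_def by simp_all
  have ne: "\<S>1 \<noteq> \<S>2"
    using assms(5) unfolding sps_less_def by simp
  interpret polestar_refinement X \<S>1 \<S>2
    using p1 p2 assms(5) unfolding sps_less_def by unfold_locales blast+
  have "1 \<le> card (nonhull_parts \<S>2)"
    using polestar_nonhull_parts_ne[OF p2 assms(2)] polestar_finite_nonhull_parts[OF p2 assms(1)]
    by (simp add: Suc_le_eq card_gt_0_iff)
  moreover have "card (nonhull_parts \<S>2) < card (nonhull_parts \<S>1)"
    by (rule card_nonhull_parts_less[OF assms(1) ne])
  moreover have "card (nonhull_parts \<S>1) \<le> card X"
    by (rule polestar_card_nonhull_parts_le[OF p1 assms(1)])
  moreover have "\<exists>\<S>3 \<in> polestar_systems X. sps_less \<S>1 \<S>3 \<and> sps_less \<S>3 \<S>2"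
    if gap: "card (nonhull_parts \<S>2) + 2 \<le> card (nonhull_parts \<S>1)"
  proof -
    obtain \<S>3 where "intermediate \<S>3"
      by (rule intermediate_exists[OF assms(1) ne])
    with gap show ?thesis
      unfolding intermediate_def polestar_systems_def sps_less_def by fastforce
  qed
  ultimately show ?thesis
    unfolding polestar_rank_eq[OF p1 assms(1)] polestar_rank_eq[OF p2 assms(1)] by linarith
qed

end
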